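(* Let $\mathbb{T}$ be the $m$-regular tree, let $L$ be the averaging operator with parameter $\beta\in[0,1]$, and let $h:\mathbb{T}\to\mathbb{R}$. Then for every continuous $f:[0,1]\to\mathbb{R}$ there exists a unique bounded function $u:\mathbb{T}\to\mathbb{R}$ with $L(u)(x)=h(x)$ for all $x\in\mathbb{T}$ and $u|_{\partial\mathbb{T}}=f$, if and only if: $0\le\beta<\tfrac12$, the series defining $S^\beta_h(x)$ converges for every $x\in\mathbb{T}$, and $$\lim_{k\to\infty}\ \sup_{x\in\mathbb{T},\,|x|=k}\ \Big|\sum_{j=1}^{k}\Big(\frac{\beta}{1-\beta}\Big)^{k-j}S^\beta_h(x^j)\Big|=0 .$$
   Context: The $m$-regular tree $\mathbb{T}$ ($m\ge 2$): its nodes are the root $\emptyset$ and all finite tuples $x=(a_1,\dots,a_k)$ with $a_i\in\{0,\dots,m-1\}$; $|x|=k$ is the level of $x$. For $x\neq\emptyset$, $\hat x$ denotes its predecessor. $S^l(x)$ is the set of the $m^l$ successors of $x$ at level $|x|+l$, $S^0(x)=\{x\}$. For $|x|=k$ and $1\le j\le k$, $x^j$ is the predecessor of $x$ at level $j$ ($x^k=x$). A branch $z$ is an infinite sequence $(a_1,a_2,\dots)$ with nodes $z_n=(a_1,\dots,a_n)$; $\partial\mathbb{T}$ is the set of branches, $\psi(z)=\sum_{k\ge1}a_k m^{-k}$; $z$ passes through $x$ if $x=z_{|x|}$. Averaging operator: $L(u)(x)=u(x)-\beta u(\hat x)-(1-\beta)\frac1m\sum_{y\in S^1(x)}u(y)$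 for $x\ne\emptyset$, $L(u)(\emptyset)=u(\emptyset)-\frac1m\sum_{y\in S^1(\emptyset)}u(y)$. $u|_{\partial\mathbb{T}}=f$ means: for every $\varepsilon>0$ there is $K$ such that $|u(x)-f(\psi(z))|<\varepsilon$ for all nodes $x$ with $|x|\ge K$ and all branches $z$ through $x$. For $\beta\in[0,1)$, $S^\beta_h(x)=\sum_{i=1}^\infty\sum_{j=0}^{i-1}\frac{\beta^{i-j-1}}{(1-\beta)^{i-j}}\frac{1}{m^j}\sum_{y\in S^j(x)}h(y)$ (equal to $\frac1\beta\sum_{i\ge1}\sum_{j=0}^{i-1}(\frac{\beta}{1-\beta})^{i-j}m^{-j}\sum_{y\in S^j(x)}h(y)$ when $\beta>0$); convention $0^0=1$. *)

theory Defs
  imports "HOL-Analysis.Analysis"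
begin

text \<open>Nodes of the m-regular tree: finite lists [a_1,...,a_k] with entries < m.
  The level |x| is length x, the predecessor of x is butlast x, and
  the predecessor at level j is take j x.\<close>

definition tree_nodes :: "nat \<Rightarrow> nat list set" where
  "tree_nodes m = {x. \<forall>a\<in>set x. a < m}"

definition succs :: "nat \<Rightarrow> nat \<Rightarrow> nat list \<Rightarrow> nat list set" where
  "succs m l x = {x @ w | w. length w = l \<and> (\<forall>a\<in>set w. a < m)}"

definition avg_op :: "nat \<Rightarrow> real \<Rightarrow> (nat list \<Rightarrow> real) \<Rightarrow> nat list \<Rightarrow> real" where
  "avg_op m \<beta> u x =
     (if x = [] then u [] - (1 / real m) * (\<Sum>a<m. u [a])
      else u x - \<beta> * u (butlast x) - (1 - \<beta>) * (1 / real m) * (\<Sum>a<m. u (x @ [a])))"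

text \<open>Branches: infinite sequences z with z i = a_(i+1) < m.\<close>
definition branches :: "nat \<Rightarrow> (nat \<Rightarrow> nat) set" where
  "branches m = {z. \<forall>i. z i < m}"

definition psi :: "nat \<Rightarrow> (nat \<Rightarrow> nat) \<Rightarrow> real" where
  "psi m z = (\<Sum>i. real (z i) / real m ^ Suc i)"

definition passes_through :: "(nat \<Rightarrow> nat) \<Rightarrow> nat list \<Rightarrow> bool" where
  "passes_through z x \<longleftrightarrow> x = map z [0..<length x]"

definition boundary_eq :: "nat \<Rightarrow> (nat list \<Rightarrow> real) \<Rightarrow> (real \<Rightarrow> real) \<Rightarrow> bool" where
  "boundary_eq m u f \<longleftrightarrow>
     (\<forall>\<epsilon>>0. \<exists>K. \<forall>x\<in>tree_nodes m. \<forall>z\<in>branches m.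
        length x \<ge> K \<and> passes_through z x \<longrightarrow> \<bar>u x - f (psi m z)\<bar> < \<epsilon>)"

text \<open>The i-th term (i \<ge> 1) of the series defining S^beta_h(x).\<close>
definition S_term :: "nat \<Rightarrow> real \<Rightarrow> (nat list \<Rightarrow> real) \<Rightarrow> nat list \<Rightarrow> nat \<Rightarrow> real" where
  "S_term m \<beta> h x i =
     (\<Sum>j<i. \<beta> ^ (i - j - 1) / (1 - \<beta>) ^ (i - j) * (1 / real m ^ j) * (\<Sum>y\<in>succs m j x. h y))"

definition S_conv :: "nat \<Rightarrow> real \<Rightarrow> (nat list \<Rightarrow> real) \<Rightarrow> nat list \<Rightarrow> bool" where
  "S_conv m \<beta> h x \<longleftrightarrow> summable (\<lambda>n. S_term m \<beta> h x (Suc n))"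

definition S_beta :: "nat \<Rightarrow> real \<Rightarrow> (nat list \<Rightarrow> real) \<Rightarrow> nat list \<Rightarrow> real" where
  "S_beta m \<beta> h x = (\<Sum>n. S_term m \<beta> h x (Suc n))"

end

theory Submission
  imports Defs
begin

text \<open>
  Write r = \<beta>/(1 - \<beta>) and a_i(x) for the average of u over S^i(x). Averaging L u = h over
  S^i(x) gives a second-order recursion for the a_i(x), whose increments a_i(x) - a_(i+1)(x)
  are the terms of the series S^\<beta>_h(x) plus a geometric error of ratio r.

  If \<beta> \<ge> 1/2 then r \<ge> 1, so for a homogeneous solution the increments can only tend to zero if
  they vanish: a homogeneous solution with boundary values is constant, and the data 0 and
  t \<mapsto> t cannot both be attained.

  If \<beta> < 1/2 and u has boundary values 0, the increments telescope: S^\<beta>_h(x) converges and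
  (1 - r) S^\<beta>_h(x) = u(x) - r u(predecessor of x). Summed along the path to x this gives
  (1 - r) \<Sum>_j r^(k-j) S^\<beta>_h(x^j) = u(x) - r^k u(root), which tends to 0 uniformly; with h = 0
  the same identity gives uniqueness. Conversely, if F is the harmonic extension of f \<circ> \<psi>, the
  discounted path average of F + S^\<beta>_h solves L u = h, and the conditions on S^\<beta>_h are exactly
  what makes its boundary values equal to f.
\<close>

section \<open>Averages over successors\<close>

lemma succs_Nil: "succs m l [] = {w. set w \<subseteq> {..<m} \<and> length w = l}"
  unfolding succs_def by auto

lemma succs_eq_image: "succs m l x = (\<lambda>w. x @ w) ` succs m l []"
  unfolding succs_def by auto

lemma finite_succs [simp]: "finite (succs m l x)"
  unfolding succs_eq_image[of m l x] by (simp add: succs_Nil finite_lists_length_eq)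

lemma card_succs: "card (succs m l x) = m ^ l"
  unfolding succs_eq_image[of m l x]
  by (simp add: card_image inj_on_def succs_Nil card_lists_length_eq)

lemma succs_one: "succs m (Suc 0) x = (\<lambda>a. x @ [a]) ` {..<m}"
  unfolding succs_def by (auto simp: length_Suc_conv)

lemma mem_succsD:
  assumes "y \<in> succs m l x"
  shows "length y = length x + l" and "take (length x) y = x"
    and "x \<in> tree_nodes m \<Longrightarrow> y \<in> tree_nodes m"
  using assms unfolding succs_def tree_nodes_def by auto

lemma succs_Nil_eq_level: "succs m k [] = {x \<in> tree_nodes m. length x = k}"
  unfolding succs_Nil tree_nodes_def by auto

lemma snoc_in_tree_nodes_iff [simp]: "x @ [a] \<in> tree_nodes m \<longleftrightarrow> x \<in> tree_nodes m \<and> a < m"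
  unfolding tree_nodes_def by auto

lemma take_in_tree_nodes: "x \<in> tree_nodes m \<Longrightarrow> take j x \<in> tree_nodes m"
  unfolding tree_nodes_def by (auto dest: in_set_takeD)

lemma sum_succs_add:
  "(\<Sum>y\<in>succs m (j + l) x. g y) = (\<Sum>y\<in>succs m j x. \<Sum>w\<in>succs m l y. g w)"
proof -
  have "(\<Sum>y\<in>succs m j x. \<Sum>w\<in>succs m l y. g w) = (\<Sum>(y, w)\<in>Sigma (succs m j x) (succs m l). g w)"
    by (rule sum.Sigma) auto
  also have "\<dots> = (\<Sum>w\<in>succs m (j + l) x. g w)"
  proof (rule sum.reindex_bij_witness[where i = "\<lambda>w. (take (length x + j) w, w)" and j = snd])
    fix w assume "w \<in> succs m (j + l) x"
    then obtain v where "w = x @ v" "length v = j + l" "\<forall>a\<in>set v. a < m"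
      unfolding succs_def by auto
    then show "(take (length x + j) w, w) \<in> Sigma (succs m j x) (succs m l)"
      unfolding succs_def
      by (auto intro!: exI[of _ "take j v"] exI[of _ "drop j v"] dest: in_set_takeD in_set_dropD)
  qed (auto simp: succs_def)
  finally show ?thesis by simp
qed

definition succ_avg :: "nat \<Rightarrow> nat \<Rightarrow> (nat list \<Rightarrow> real) \<Rightarrow> nat list \<Rightarrow> real" where
  "succ_avg m j g x = 1 / real m ^ j * (\<Sum>y\<in>succs m j x. g y)"

lemma succ_avg_0 [simp]: "succ_avg m 0 g x = g x"
  unfolding succ_avg_def succs_def by simp

lemma succ_avg_one: "succ_avg m (Suc 0) g x = (\<Sum>a<m. g (x @ [a])) / real m"
  unfolding succ_avg_def succs_one by (simp add: sum.reindex inj_on_def)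

lemma succ_avg_succ_avg: "succ_avg m (j + l) g x = succ_avg m j (succ_avg m l g) x"
  unfolding succ_avg_def sum_succs_add
  by (simp add: power_add sum_distrib_left mult.assoc)

lemma succ_avg_diff: "succ_avg m j (\<lambda>y. f y - g y) x = succ_avg m j f x - succ_avg m j g x"
  unfolding succ_avg_def by (simp add: sum_subtractf algebra_simps)

lemma succ_avg_cmult: "succ_avg m j (\<lambda>y. c * f y) x = c * succ_avg m j f x"
  unfolding succ_avg_def by (simp add: sum_distrib_left[symmetric] algebra_simps)

lemma succ_avg_const: "m > 0 \<Longrightarrow> succ_avg m j (\<lambda>_. c) x = c"
  unfolding succ_avg_def by (simp add: card_succs)

lemma succ_avg_cong: "(\<And>y. y \<in> succs m j x \<Longrightarrow> f y = g y) \<Longrightarrow> succ_avg m j f x = succ_avg m j g x"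
  unfolding succ_avg_def by simp

lemma abs_succ_avg_le:
  assumes "m > 0" and "\<And>y. y \<in> succs m j x \<Longrightarrow> \<bar>g y\<bar> \<le> B"
  shows "\<bar>succ_avg m j g x\<bar> \<le> B"
proof -
  have "\<bar>\<Sum>y\<in>succs m j x. g y\<bar> \<le> (\<Sum>y\<in>succs m j x. B)"
    by (rule order_trans[OF sum_abs sum_mono]) (use assms(2) in auto)
  then show ?thesis
    using assms(1) by (simp add: succ_avg_def card_succs abs_mult field_simps)
qed

section \<open>Branches and boundary values\<close>

definition pad_branch :: "nat list \<Rightarrow> nat \<Rightarrow> nat" where
  "pad_branch x i = (if i < length x then x ! i else 0)"

lemma pad_branch_in_branches: "m > 0 \<Longrightarrow> x \<in> tree_nodes m \<Longrightarrow> pad_branch x \<in> branches m"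
  unfolding pad_branch_def branches_def tree_nodes_def by (auto simp: nth_mem)

lemma passes_through_pad_branch: "passes_through (pad_branch x) x"
  unfolding passes_through_def by (rule nth_equalityI) (auto simp: pad_branch_def)

lemma passes_through_nth: "passes_through z x \<Longrightarrow> i < length x \<Longrightarrow> z i = x ! i"
  unfolding passes_through_def by (metis add_0 diff_zero length_upt nth_map nth_upt)

lemma passes_through_take: "passes_through z x \<Longrightarrow> passes_through z (take k x)"
  unfolding passes_through_def
  by (metis length_upt minus_nat.diff_0 take_map take_upt add_0 length_take nat_le_linear take_all)

lemma passes_through_map_upt: "passes_through z (map z [0..<k])"
  unfolding passes_through_def by simp

lemma map_upt_in_tree_nodes: "z \<in> branches m \<Longrightarrow> map z [0..<k] \<in> tree_nodes m"
  unfolding branches_def tree_nodes_def by auto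

lemma sums_psi_max_digits: "m \<ge> 2 \<Longrightarrow> (\<lambda>i. (real m - 1) / real m ^ Suc i) sums 1"
proof -
  assume "m \<ge> 2"
  then have m: "real m > 1" by simp
  have "(\<lambda>i. (real m - 1) / real m * (1 / real m) ^ i) sums ((real m - 1) / real m * (1 / (1 - 1 / real m)))"
    by (rule sums_mult, rule geometric_sums) (use m in simp)
  also have "(\<lambda>i. (real m - 1) / real m * (1 / real m) ^ i) = (\<lambda>i. (real m - 1) / real m ^ Suc i)"
    by (simp add: fun_eq_iff power_one_over)
  also have "(real m - 1) / real m * (1 / (1 - 1 / real m)) = 1"
    using m by (simp add: field_simps)
  finally show ?thesis .
qed

lemma psi_summand_bounds:
  assumes "m \<ge> 2" and "z \<in> branches m"
  shows "0 \<le> real (z i) / real m ^ Suc i" and "real (z i) / real m ^ Suc i \<le> (real m - 1) / real m ^ Suc i"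
proof -
  have "z i < m" using assms unfolding branches_def by simp
  then have "real (z i) \<le> real m - 1" by linarith
  then show "real (z i) / real m ^ Suc i \<le> (real m - 1) / real m ^ Suc i"
    using assms(1) by (intro divide_right_mono) auto
qed simp

lemma summable_psi: "m \<ge> 2 \<Longrightarrow> z \<in> branches m \<Longrightarrow> summable (\<lambda>i. real (z i) / real m ^ Suc i)"
  by (rule summable_comparison_test'[OF sums_summable[OF sums_psi_max_digits], of _ 0])
     (use psi_summand_bounds in auto)

lemma psi_in_unit_interval:
  assumes "m \<ge> 2" and "z \<in> branches m"
  shows "psi m z \<in> {0..1}"
proof -
  have "0 \<le> psi m z"
    unfolding psi_def by (intro suminf_nonneg summable_psi psi_summand_bounds assms)
  moreover have "psi m z \<le> (\<Sum>i. (real m - 1) / real m ^ Suc i)"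
    unfolding psi_def using assms
    by (intro suminf_le summable_psi psi_summand_bounds sums_summable[OF sums_psi_max_digits])
  ultimately show ?thesis using sums_unique[OF sums_psi_max_digits[OF assms(1)]] by simp
qed

lemma psi_zero_branch: "psi m (\<lambda>_. 0) = 0"
  unfolding psi_def by simp

lemma psi_max_branch:
  assumes "m \<ge> 2"
  shows "psi m (\<lambda>_. m - 1) = 1"
proof -
  have "real (m - 1) = real m - 1" using assms by simp
  then show ?thesis
    unfolding psi_def using sums_unique[OF sums_psi_max_digits[OF assms]] by simp
qed

lemma abs_psi_diff_le:
  assumes m: "m \<ge> 2" and z: "z \<in> branches m" and z': "z' \<in> branches m"
    and agree: "\<forall>i<n. z i = z' i"
  shows "\<bar>psi m z - psi m z'\<bar> \<le> 1 / real m ^ n"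
proof -
  define d where "d i = real (z i) / real m ^ Suc i - real (z' i) / real m ^ Suc i" for i
  define b where "b i = (if i < n then 0 else (real m - 1) / real m ^ Suc i)" for i
  have d: "d sums (psi m z - psi m z')"
    unfolding d_def psi_def by (intro sums_diff summable_sums summable_psi m z z')
  have b: "b sums (1 / real m ^ n)"
  proof -
    have "(\<lambda>i. b (i + n)) = (\<lambda>i. 1 / real m ^ n * ((real m - 1) / real m ^ Suc i))"
      by (simp add: b_def fun_eq_iff power_add field_simps)
    then have "(\<lambda>i. b (i + n)) sums (1 / real m ^ n * 1)"
      using sums_mult[OF sums_psi_max_digits[OF m]] by metis
    then show ?thesis unfolding sums_iff_shift by (simp add: b_def)
  qed
  have db: "\<bar>d i\<bar> \<le> b i" for i
  proof (cases "i < n")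
    case False
    then have "b i = (real m - 1) / real m ^ Suc i" unfolding b_def by simp
    then show ?thesis
      using psi_summand_bounds[OF m z, of i] psi_summand_bounds[OF m z', of i] unfolding d_def by linarith
  qed (use agree in \<open>simp add: d_def b_def\<close>)
  have "psi m z - psi m z' \<le> 1 / real m ^ n"
    by (rule sums_le[OF _ d b]) (use db in \<open>simp add: abs_le_iff\<close>)
  moreover have "- (psi m z - psi m z') \<le> 1 / real m ^ n"
    by (rule sums_le[OF _ sums_minus[OF d] b]) (use db in \<open>simp add: abs_le_iff\<close>)
  ultimately show ?thesis by linarith
qed

lemma uniformly_continuous_on_branches:
  assumes m: "m \<ge> 2" and f: "continuous_on {0..1} (f :: real \<Rightarrow> real)" and e: "e > 0"
  obtains N where "\<And>z z'. z \<in> branches m \<Longrightarrow> z' \<in> branches m \<Longrightarrow> \<forall>i<N. z i = z' i \<Longrightarrow>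
    \<bar>f (psi m z) - f (psi m z')\<bar> < e"
proof -
  obtain d where d: "d > 0" and dd: "\<And>t t'. t \<in> {0..1} \<Longrightarrow> t' \<in> {0..1} \<Longrightarrow> dist t' t < d \<Longrightarrow> dist (f t') (f t) < e"
    using compact_uniformly_continuous[OF f compact_Icc] e unfolding uniformly_continuous_on_def by metis
  have "1 / real m < 1" using m by simp
  then obtain N where N: "(1 / real m) ^ N < d"
    using real_arch_pow_inv[OF d] by blast
  show ?thesis
  proof
    fix z z' assume z: "z \<in> branches m" and z': "z' \<in> branches m" and agree: "\<forall>i<N. z i = z' i"
    have "\<bar>psi m z - psi m z'\<bar> \<le> (1 / real m) ^ N"
      using abs_psi_diff_le[OF m z z' agree] by (simp add: power_one_over)
    then have "dist (psi m z) (psi m z') < d"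
      using N by (simp add: dist_real_def)
    then show "\<bar>f (psi m z) - f (psi m z')\<bar> < e"
      using dd[OF psi_in_unit_interval[OF m z'] psi_in_unit_interval[OF m z]] by (simp add: dist_real_def)
  qed
qed

lemma boundary_eq_add:
  assumes "boundary_eq m u f" and "boundary_eq m v g"
  shows "boundary_eq m (\<lambda>x. u x + v x) (\<lambda>t. f t + g t)"
  unfolding boundary_eq_def
proof (intro allI impI)
  fix e :: real assume "e > 0"
  then have "e / 2 > 0" by simp
  then obtain K1 K2 where
    K1: "\<And>x z. x \<in> tree_nodes m \<Longrightarrow> z \<in> branches m \<Longrightarrow> K1 \<le> length x \<and> passes_through z x \<Longrightarrow> \<bar>u x - f (psi m z)\<bar> < e / 2" and
    K2: "\<And>x z. x \<in> tree_nodes m \<Longrightarrow> z \<in> branches m \<Longrightarrow> K2 \<le> length x \<and> passes_through z x \<Longrightarrow> \<bar>v x - g (psi m z)\<bar> < e / 2"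
    using assms unfolding boundary_eq_def by meson
  show "\<exists>K. \<forall>x\<in>tree_nodes m. \<forall>z\<in>branches m. K \<le> length x \<and> passes_through z x \<longrightarrow>
      \<bar>u x + v x - (f (psi m z) + g (psi m z))\<bar> < e"
  proof (intro exI[of _ "max K1 K2"] ballI impI)
    fix x z assume "x \<in> tree_nodes m" "z \<in> branches m" "max K1 K2 \<le> length x \<and> passes_through z x"
    then have "\<bar>u x - f (psi m z)\<bar> < e / 2" and "\<bar>v x - g (psi m z)\<bar> < e / 2"
      using K1 K2 by auto
    then show "\<bar>u x + v x - (f (psi m z) + g (psi m z))\<bar> < e" by linarith
  qed
qed

lemma boundary_eq_minus: "boundary_eq m u f \<Longrightarrow> boundary_eq m (\<lambda>x. - u x) (\<lambda>t. - f t)"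
  unfolding boundary_eq_def by (simp add: abs_minus_commute)

lemma boundary_eq_zero_iff:
  assumes "m > 0"
  shows "boundary_eq m v (\<lambda>_. 0) \<longleftrightarrow> (\<forall>e>0. \<exists>K. \<forall>x\<in>tree_nodes m. K \<le> length x \<longrightarrow> \<bar>v x\<bar> < e)"
  unfolding boundary_eq_def
  using pad_branch_in_branches[OF assms] passes_through_pad_branch by fastforce

lemma boundary_eq_bounded:
  assumes m: "m \<ge> 2" and u: "boundary_eq m u f" and f: "\<forall>t\<in>{0..1}. \<bar>f t\<bar> \<le> M"
  obtains C where "\<forall>x\<in>tree_nodes m. \<bar>u x\<bar> \<le> C"
proof -
  obtain K where K: "\<forall>x\<in>tree_nodes m. \<forall>z\<in>branches m. K \<le> length x \<and> passes_through z x \<longrightarrow> \<bar>u x - f (psi m z)\<bar> < 1"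
    using u unfolding boundary_eq_def by (meson zero_less_one)
  define A where "A = {x \<in> tree_nodes m. length x < K}"
  have "A \<subseteq> {xs. set xs \<subseteq> {..<m} \<and> length xs \<le> K}"
    unfolding A_def tree_nodes_def by auto
  then have "finite A" by (rule finite_subset) (simp add: finite_lists_length_le)
  have "\<bar>u x\<bar> \<le> M + 1 + (\<Sum>y\<in>A. \<bar>u y\<bar>)" if x: "x \<in> tree_nodes m" for x
  proof (cases "length x < K")
    case True
    then have "\<bar>u x\<bar> \<le> (\<Sum>y\<in>A. \<bar>u y\<bar>)"
      using \<open>finite A\<close> x by (intro member_le_sum) (auto simp: A_def)
    moreover have "0 \<le> M" using f by force
    ultimately show ?thesis by linarith
  next
    case False
    have z: "pad_branch x \<in> branches m" using m x by (intro pad_branch_in_branches) auto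
    then have "\<bar>u x - f (psi m (pad_branch x))\<bar> < 1"
      using K x False passes_through_pad_branch by auto
    moreover have "\<bar>f (psi m (pad_branch x))\<bar> \<le> M" using f psi_in_unit_interval[OF m z] by blast
    moreover have "0 \<le> (\<Sum>y\<in>A. \<bar>u y\<bar>)" by (simp add: sum_nonneg)
    ultimately show ?thesis by linarith
  qed
  then show thesis using that by blast
qed

lemma boundary_eq_descendants_close:
  assumes m: "m > 0" and g: "boundary_eq m g f" and e: "e > 0"
  obtains N where "\<And>y l w. y \<in> tree_nodes m \<Longrightarrow> N \<le> length y \<Longrightarrow> w \<in> succs m l y \<Longrightarrow> \<bar>g w - g y\<bar> < e"
proof -
  obtain N where N: "\<forall>x\<in>tree_nodes m. \<forall>z\<in>branches m. N \<le> length x \<and> passes_through z x \<longrightarrow> \<bar>g x - f (psi m z)\<bar> < e / 2"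
    using g e unfolding boundary_eq_def by (meson half_gt_zero)
  show thesis
  proof (rule that)
    fix y l w assume y: "y \<in> tree_nodes m" and l: "N \<le> length y" and w: "w \<in> succs m l y"
    have wT: "w \<in> tree_nodes m" and lw: "length w = length y + l" and yw: "take (length y) w = y"
      using mem_succsD[OF w] y by auto
    have z: "pad_branch w \<in> branches m" by (rule pad_branch_in_branches[OF m wT])
    have "passes_through (pad_branch w) y"
      using passes_through_take[OF passes_through_pad_branch, of w "length y"] yw by simp
    then have "\<bar>g y - f (psi m (pad_branch w))\<bar> < e / 2" using N y z l by blast
    moreover have "\<bar>g w - f (psi m (pad_branch w))\<bar> < e / 2"
      using N wT z l lw passes_through_pad_branch by auto
    ultimately show "\<bar>g w - g y\<bar> < e" by linarith
  qed
qed

lemma boundary_eq_comp_psi_pad: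
  assumes m: "m \<ge> 2" and f: "continuous_on {0..1} f"
  shows "boundary_eq m (\<lambda>x. f (psi m (pad_branch x))) f"
  unfolding boundary_eq_def
proof (intro allI impI)
  fix e :: real assume "e > 0"
  with uniformly_continuous_on_branches[OF m f] obtain N where N: "\<And>z z'. z \<in> branches m \<Longrightarrow> z' \<in> branches m \<Longrightarrow>
      \<forall>i<N. z i = z' i \<Longrightarrow> \<bar>f (psi m z) - f (psi m z')\<bar> < e"
    by blast
  show "\<exists>K. \<forall>x\<in>tree_nodes m. \<forall>z\<in>branches m. K \<le> length x \<and> passes_through z x \<longrightarrow>
      \<bar>f (psi m (pad_branch x)) - f (psi m z)\<bar> < e"
  proof (intro exI[of _ N] ballI impI)
    fix x z assume x: "x \<in> tree_nodes m" and z: "z \<in> branches m" and "N \<le> length x \<and> passes_through z x"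
    then have "\<forall>i<N. pad_branch x i = z i"
      using passes_through_nth by (auto simp: pad_branch_def)
    then show "\<bar>f (psi m (pad_branch x)) - f (psi m z)\<bar> < e"
      using N pad_branch_in_branches[OF _ x] z m by simp
  qed
qed

section \<open>Harmonic extension\<close>

definition harmonic_ext :: "nat \<Rightarrow> (nat list \<Rightarrow> real) \<Rightarrow> nat list \<Rightarrow> real" where
  "harmonic_ext m g y = lim (\<lambda>j. succ_avg m j g y)"

lemma succ_avg_Cauchy_bound:
  assumes m: "m > 0" and g: "boundary_eq m g f" and e: "e > 0"
  obtains N where "\<And>y j l. y \<in> tree_nodes m \<Longrightarrow> N \<le> length y + j \<Longrightarrow>
    \<bar>succ_avg m (j + l) g y - succ_avg m j g y\<bar> \<le> e"
proof -
  obtain N where N: "\<And>y l w. y \<in> tree_nodes m \<Longrightarrow> N \<le> length y \<Longrightarrow> w \<in> succs m l y \<Longrightarrow> \<bar>g w - g y\<bar> < e"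
    using boundary_eq_descendants_close[OF m g e] by blast
  have close: "\<bar>succ_avg m l g w - g w\<bar> \<le> e" if "w \<in> tree_nodes m" "N \<le> length w" for w l
  proof -
    have "succ_avg m l g w - g w = succ_avg m l (\<lambda>v. g v - g w) w"
      by (simp add: succ_avg_diff succ_avg_const[OF m])
    also have "\<bar>\<dots>\<bar> \<le> e"
      using N[OF that] by (intro abs_succ_avg_le[OF m] less_imp_le)
    finally show ?thesis .
  qed
  have "\<bar>succ_avg m (j + l) g y - succ_avg m j g y\<bar> \<le> e"
    if y: "y \<in> tree_nodes m" and N_le: "N \<le> length y + j" for y j l
  proof -
    have "succ_avg m (j + l) g y - succ_avg m j g y = succ_avg m j (\<lambda>w. succ_avg m l g w - g w) y"
      by (simp add: succ_avg_succ_avg succ_avg_diff)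
    also have "\<bar>\<dots>\<bar> \<le> e"
    proof (rule abs_succ_avg_le[OF m])
      fix w assume w: "w \<in> succs m j y"
      then have "w \<in> tree_nodes m" and "N \<le> length w"
        using mem_succsD[OF w] y N_le by auto
      then show "\<bar>succ_avg m l g w - g w\<bar> \<le> e" by (rule close)
    qed
    finally show ?thesis .
  qed
  then show thesis using that by blast
qed

lemma harmonic_ext_tendsto:
  assumes m: "m > 0" and g: "boundary_eq m g f" and y: "y \<in> tree_nodes m"
  shows "(\<lambda>j. succ_avg m j g y) \<longlonglongrightarrow> harmonic_ext m g y"
proof -
  have "Cauchy (\<lambda>j. succ_avg m j g y)"
  proof (rule CauchyI)
    fix e :: real assume "e > 0"
    then have "e / 3 > 0" by simp
    then obtain N where N: "\<And>y j l. y \<in> tree_nodes m \<Longrightarrow> N \<le> length y + j \<Longrightarrow>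
        \<bar>succ_avg m (j + l) g y - succ_avg m j g y\<bar> \<le> e / 3"
      using succ_avg_Cauchy_bound[OF m g] by blast
    have near: "\<bar>succ_avg m p g y - succ_avg m N g y\<bar> \<le> e / 3" if "N \<le> p" for p
      using N[OF y, of N "p - N"] that by simp
    show "\<exists>M. \<forall>p\<ge>M. \<forall>q\<ge>M. norm (succ_avg m p g y - succ_avg m q g y) < e"
    proof (intro exI allI impI)
      fix p q assume "N \<le> p" "N \<le> q"
      then show "norm (succ_avg m p g y - succ_avg m q g y) < e"
        using near[of p] near[of q] \<open>e > 0\<close> unfolding real_norm_def by linarith
    qed
  qed
  then show ?thesis
    unfolding harmonic_ext_def by (simp add: Cauchy_convergent_iff convergent_LIMSEQ_iff)
qed

lemma harmonic_ext_mean: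
  assumes m: "m > 0" and g: "boundary_eq m g f" and y: "y \<in> tree_nodes m"
  shows "(\<Sum>a<m. harmonic_ext m g (y @ [a])) / real m = harmonic_ext m g y"
proof (rule LIMSEQ_unique)
  show "(\<lambda>j. succ_avg m (Suc j) g y) \<longlonglongrightarrow> harmonic_ext m g y"
    using LIMSEQ_Suc[OF harmonic_ext_tendsto[OF m g y]] .
  have "(\<lambda>j. (\<Sum>a<m. succ_avg m j g (y @ [a])) / real m) \<longlonglongrightarrow> (\<Sum>a<m. harmonic_ext m g (y @ [a])) / real m"
    using y m by (intro tendsto_divide tendsto_sum harmonic_ext_tendsto[OF m g] tendsto_const) auto
  moreover have "succ_avg m (Suc j) g y = (\<Sum>a<m. succ_avg m j g (y @ [a])) / real m" for j
    using succ_avg_succ_avg[of m 1 j g y] succ_avg_one[of m "succ_avg m j g" y] by simp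
  ultimately show "(\<lambda>j. succ_avg m (Suc j) g y) \<longlonglongrightarrow> (\<Sum>a<m. harmonic_ext m g (y @ [a])) / real m"
    by simp
qed

lemma boundary_eq_harmonic_ext:
  assumes m: "m > 0" and g: "boundary_eq m g f"
  shows "boundary_eq m (harmonic_ext m g) f"
proof -
  have "boundary_eq m (\<lambda>x. harmonic_ext m g x - g x) (\<lambda>_. 0)"
    unfolding boundary_eq_zero_iff[OF m]
  proof (intro allI impI)
    fix e :: real assume "e > 0"
    then obtain N where N: "\<And>y j l. y \<in> tree_nodes m \<Longrightarrow> N \<le> length y + j \<Longrightarrow>
        \<bar>succ_avg m (j + l) g y - succ_avg m j g y\<bar> \<le> e / 2"
      using succ_avg_Cauchy_bound[OF m g half_gt_zero] by blast
    have "\<bar>harmonic_ext m g y - g y\<bar> \<le> e / 2" if "y \<in> tree_nodes m" "N \<le> length y" for y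
      using N[of y 0] that harmonic_ext_tendsto[OF m g that(1)]
      by (intro LIMSEQ_le_const2[OF tendsto_rabs[OF tendsto_diff[OF _ tendsto_const]]]) auto
    then show "\<exists>K. \<forall>x\<in>tree_nodes m. K \<le> length x \<longrightarrow> \<bar>harmonic_ext m g x - g x\<bar> < e"
      using \<open>e > 0\<close> by (intro exI[of _ N]) force
  qed
  from boundary_eq_add[OF g this] show ?thesis by simp
qed

section \<open>Solutions and the series S^\<beta>_h\<close>

lemma S_term_eq_succ_avg:
  "S_term m \<beta> h x i = (\<Sum>j<i. \<beta> ^ (i - j - 1) / (1 - \<beta>) ^ (i - j) * succ_avg m j h x)"
  unfolding S_term_def succ_avg_def by (simp add: mult.assoc)

lemma S_term_0 [simp]: "S_term m \<beta> h x 0 = 0"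
  unfolding S_term_def by simp

lemma S_term_1: "S_term m \<beta> h x (Suc 0) = h x / (1 - \<beta>)"
  unfolding S_term_eq_succ_avg by simp

lemma S_term_Suc_Suc:
  assumes "\<beta> < 1"
  shows "S_term m \<beta> h x (Suc (Suc i)) =
    succ_avg m (Suc i) h x / (1 - \<beta>) + \<beta> / (1 - \<beta>) * S_term m \<beta> h x (Suc i)"
proof -
  have "S_term m \<beta> h x (Suc (Suc i)) =
      (\<Sum>j<Suc i. \<beta> ^ (Suc (Suc i) - j - 1) / (1 - \<beta>) ^ (Suc (Suc i) - j) * succ_avg m j h x)
      + succ_avg m (Suc i) h x / (1 - \<beta>)"
    unfolding S_term_eq_succ_avg by simp
  also have "(\<Sum>j<Suc i. \<beta> ^ (Suc (Suc i) - j - 1) / (1 - \<beta>) ^ (Suc (Suc i) - j) * succ_avg m j h x) =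
      (\<Sum>j<Suc i. \<beta> / (1 - \<beta>) * (\<beta> ^ (Suc i - j - 1) / (1 - \<beta>) ^ (Suc i - j) * succ_avg m j h x))"
  proof (rule sum.cong)
    fix j assume "j \<in> {..<Suc i}"
    then have "Suc (Suc i) - j - 1 = Suc (Suc i - j - 1)" "Suc (Suc i) - j = Suc (Suc i - j)"
      by auto
    then show "\<beta> ^ (Suc (Suc i) - j - 1) / (1 - \<beta>) ^ (Suc (Suc i) - j) * succ_avg m j h x =
        \<beta> / (1 - \<beta>) * (\<beta> ^ (Suc i - j - 1) / (1 - \<beta>) ^ (Suc i - j) * succ_avg m j h x)"
      by simp
  qed simp
  also have "\<dots> = \<beta> / (1 - \<beta>) * S_term m \<beta> h x (Suc i)"
    by (simp only: S_term_eq_succ_avg sum_distrib_left)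
  finally show ?thesis by simp
qed

lemma S_term_Suc_split:
  assumes "m > 0"
  shows "S_term m \<beta> h x (Suc n) =
    \<beta> ^ n / (1 - \<beta>) ^ Suc n * h x + (\<Sum>a<m. S_term m \<beta> h (x @ [a]) n) / real m"
proof -
  have "succ_avg m (Suc j) h x = (\<Sum>a<m. succ_avg m j h (x @ [a])) / real m" for j
    using succ_avg_succ_avg[of m 1 j h x] succ_avg_one[of m "succ_avg m j h" x] by simp
  then show ?thesis
    unfolding S_term_eq_succ_avg sum.lessThan_Suc_shift
    by (simp add: sum_distrib_left sum_divide_distrib sum.swap[of _ "{..<m}"])
qed

text \<open>At the root \<open>avg_op\<close> has no \<open>\<beta>\<close>-term. For a solution, the virtual parent value
  \<open>u [] - h []\<close> makes the equation at the root take the same form as at every other node.\<close>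

definition parent_val :: "(nat list \<Rightarrow> real) \<Rightarrow> (nat list \<Rightarrow> real) \<Rightarrow> nat list \<Rightarrow> real" where
  "parent_val u h x = (if x = [] then u [] - h [] else u (butlast x))"

lemma avg_op_diff: "avg_op m \<beta> (\<lambda>x. v x - u x) y = avg_op m \<beta> v y - avg_op m \<beta> u y"
  unfolding avg_op_def by (simp add: sum_subtractf algebra_simps)

lemma solution_eq_parent_val:
  assumes "x \<in> tree_nodes m" and "\<forall>y\<in>tree_nodes m. avg_op m \<beta> u y = h y"
  shows "u x - \<beta> * parent_val u h x - (1 - \<beta>) * succ_avg m (Suc 0) u x = h x"
proof (cases "x = []")
  case True
  have root: "succ_avg m (Suc 0) u [] = u [] - h []"
    using assms True unfolding avg_op_def succ_avg_one by auto
  show ?thesis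
    using True by (simp add: parent_val_def root algebra_simps)
next
  case False
  then show ?thesis
    using assms unfolding parent_val_def succ_avg_one avg_op_def by auto
qed

lemma succ_avg_avg_op:
  assumes m: "m > 0"
  shows "succ_avg m (Suc j) (avg_op m \<beta> u) x =
    succ_avg m (Suc j) u x - \<beta> * succ_avg m j u x - (1 - \<beta>) * succ_avg m (Suc (Suc j)) u x"
proof -
  have "succ_avg m (Suc j) (avg_op m \<beta> u) x =
      succ_avg m (Suc j) (\<lambda>y. u y - \<beta> * u (butlast y) - (1 - \<beta>) * succ_avg m (Suc 0) u y) x"
    by (rule succ_avg_cong) (auto simp: avg_op_def succ_avg_one dest: mem_succsD(1))
  also have "\<dots> = succ_avg m (Suc j) u x - \<beta> * succ_avg m (Suc j) (\<lambda>y. u (butlast y)) x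
      - (1 - \<beta>) * succ_avg m (Suc j) (succ_avg m (Suc 0) u) x"
    by (simp add: succ_avg_diff succ_avg_cmult)
  also have "succ_avg m (Suc j) (\<lambda>y. u (butlast y)) x = succ_avg m j u x"
  proof -
    have "succ_avg m (Suc 0) (\<lambda>y. u (butlast y)) = u"
      using m by (simp add: fun_eq_iff succ_avg_one)
    then show ?thesis using succ_avg_succ_avg[of m j 1 "\<lambda>y. u (butlast y)" x] by simp
  qed
  also have "succ_avg m (Suc j) (succ_avg m (Suc 0) u) x = succ_avg m (Suc (Suc j)) u x"
    using succ_avg_succ_avg[of m "Suc j" 1 u x] by simp
  finally show ?thesis .
qed

text \<open>Summing over \<open>i\<close> telescopes the left-hand side; this is where S^\<beta>_h comes from.\<close>

lemma succ_avg_increment: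
  assumes m: "m > 0" and x: "x \<in> tree_nodes m" and u: "\<forall>y\<in>tree_nodes m. avg_op m \<beta> u y = h y"
    and \<beta>: "\<beta> < 1"
  shows "succ_avg m i u x - succ_avg m (Suc i) u x =
    S_term m \<beta> h x (Suc i) + (\<beta> / (1 - \<beta>)) ^ Suc i * (parent_val u h x - u x)"
proof (induction i)
  case 0
  have "(1 - \<beta>) * (u x - succ_avg m (Suc 0) u x) = h x + \<beta> * (parent_val u h x - u x)"
    using solution_eq_parent_val[OF x u] by (simp add: algebra_simps)
  then have "u x - succ_avg m (Suc 0) u x = (h x + \<beta> * (parent_val u h x - u x)) / (1 - \<beta>)"
    using \<beta> by (simp add: eq_divide_eq mult.commute)
  then show ?case by (simp add: S_term_1 add_divide_distrib)
next
  case (Suc i)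
  have "succ_avg m (Suc i) (avg_op m \<beta> u) x = succ_avg m (Suc i) h x"
    using u mem_succsD(3)[OF _ x] by (intro succ_avg_cong) auto
  then have "(1 - \<beta>) * (succ_avg m (Suc i) u x - succ_avg m (Suc (Suc i)) u x) =
      succ_avg m (Suc i) h x + \<beta> * (succ_avg m i u x - succ_avg m (Suc i) u x)"
    unfolding succ_avg_avg_op[OF m] by (simp add: algebra_simps)
  then have "succ_avg m (Suc i) u x - succ_avg m (Suc (Suc i)) u x =
      (succ_avg m (Suc i) h x + \<beta> * (succ_avg m i u x - succ_avg m (Suc i) u x)) / (1 - \<beta>)"
    using \<beta> by (simp add: eq_divide_eq mult.commute)
  also have "\<dots> = succ_avg m (Suc i) h x / (1 - \<beta>)
      + \<beta> / (1 - \<beta>) * (succ_avg m i u x - succ_avg m (Suc i) u x)"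
    by (simp add: add_divide_distrib)
  finally show ?case
    unfolding S_term_Suc_Suc[OF \<beta>] Suc by (simp only: power_Suc distrib_left add.assoc mult.assoc)
qed

lemma beta_ratio_bounds:
  fixes \<beta> :: real
  assumes "0 \<le> \<beta>" and "\<beta> < 1/2"
  shows "0 \<le> \<beta> / (1 - \<beta>)" and "\<beta> / (1 - \<beta>) < 1"
  using assms by (simp_all add: divide_less_eq)

lemma succ_avg_tendsto_zero:
  assumes m: "m > 0" and u: "boundary_eq m u (\<lambda>_. 0)" and x: "x \<in> tree_nodes m"
  shows "(\<lambda>n. succ_avg m n u x) \<longlonglongrightarrow> 0"
proof (rule LIMSEQ_I)
  fix e :: real assume "e > 0"
  then obtain K where K: "\<forall>y\<in>tree_nodes m. K \<le> length y \<longrightarrow> \<bar>u y\<bar> < e / 2"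
    using u unfolding boundary_eq_zero_iff[OF m] by (meson half_gt_zero)
  have "\<bar>succ_avg m n u x\<bar> \<le> e / 2" if "K \<le> n" for n
  proof (rule abs_succ_avg_le[OF m])
    fix y assume "y \<in> succs m n x"
    then have "y \<in> tree_nodes m" "K \<le> length y" using mem_succsD x that by auto
    then show "\<bar>u y\<bar> \<le> e / 2" using K by fastforce
  qed
  then show "\<exists>K. \<forall>n\<ge>K. norm (succ_avg m n u x - 0) < e"
    using \<open>e > 0\<close> by (intro exI[of _ K]) force
qed

lemma S_beta_of_solution:
  assumes m: "m > 0" and \<beta>: "0 \<le> \<beta>" "\<beta> < 1/2"
    and u: "\<forall>y\<in>tree_nodes m. avg_op m \<beta> u y = h y"
    and lim: "(\<lambda>n. succ_avg m n u x) \<longlonglongrightarrow> 0" and x: "x \<in> tree_nodes m"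
  shows "S_conv m \<beta> h x"
    and "(1 - \<beta> / (1 - \<beta>)) * S_beta m \<beta> h x = u x - \<beta> / (1 - \<beta>) * parent_val u h x"
proof -
  define r where "r = \<beta> / (1 - \<beta>)"
  define e where "e = parent_val u h x - u x"
  have r: "0 \<le> r" "r < 1" using beta_ratio_bounds[OF \<beta>] unfolding r_def by auto
  have terms: "S_term m \<beta> h x (Suc i) = (succ_avg m i u x - succ_avg m (Suc i) u x) - r ^ Suc i * e" for i
    using succ_avg_increment[OF m x u, of i] \<beta> unfolding r_def e_def by simp
  have "(\<lambda>i. succ_avg m i u x - succ_avg m (Suc i) u x) sums u x"
    using telescope_sums'[OF lim] by simp
  moreover have "(\<lambda>i. r ^ Suc i * e) sums (r * e * (1 / (1 - r)))"
    using sums_mult[OF geometric_sums, of r "r * e"] r by (simp add: mult_ac)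
  ultimately have sums: "(\<lambda>i. S_term m \<beta> h x (Suc i)) sums (u x - r * e * (1 / (1 - r)))"
    unfolding terms by (rule sums_diff)
  then show "S_conv m \<beta> h x"
    unfolding S_conv_def by (rule sums_summable)
  have "S_beta m \<beta> h x = u x - r * e * (1 / (1 - r))"
    unfolding S_beta_def using sums by (rule sums_unique[symmetric])
  then show "(1 - r) * S_beta m \<beta> h x = u x - r * parent_val u h x"
    using r unfolding e_def by (simp add: field_simps)
qed

lemma homogeneous_solution_eq_zero:
  assumes m: "m > 0" and \<beta>: "0 \<le> \<beta>" "\<beta> < 1/2"
    and w: "\<forall>y\<in>tree_nodes m. avg_op m \<beta> w y = 0" and bd: "boundary_eq m w (\<lambda>_. 0)"
    and x: "x \<in> tree_nodes m"
  shows "w x = 0"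
proof -
  define r where "r = \<beta> / (1 - \<beta>)"
  have r: "r < 1" using beta_ratio_bounds[OF \<beta>] unfolding r_def by auto
  have "S_beta m \<beta> (\<lambda>_. 0) y = 0" for y
    unfolding S_beta_def S_term_def by simp
  then have parent: "w y = r * parent_val w (\<lambda>_. 0) y" if "y \<in> tree_nodes m" for y
    using S_beta_of_solution(2)[OF m \<beta> _ succ_avg_tendsto_zero[OF m bd that] that, of "\<lambda>_. 0"] w
    unfolding r_def by simp
  have "(1 - r) * w [] = 0"
    using parent[of "[]"] by (simp add: parent_val_def tree_nodes_def algebra_simps)
  with r have "w [] = 0" by simp
  from x show ?thesis
  proof (induction x rule: rev_induct)
    case (snoc a xs)
    then show ?case using parent[OF snoc.prems] by (simp add: parent_val_def)
  qed (use \<open>w [] = 0\<close> in simp)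
qed

lemma homogeneous_solution_constant:
  assumes m: "m > 0" and \<beta>: "1/2 \<le> \<beta>" "\<beta> \<le> 1"
    and w: "\<forall>y\<in>tree_nodes m. avg_op m \<beta> w y = 0" and bd: "boundary_eq m w f"
    and x: "x \<in> tree_nodes m"
  shows "w x = w []"
proof -
  have parent: "w y = w (butlast y)" if y: "y \<in> tree_nodes m" "y \<noteq> []" for y
  proof (cases "\<beta> = 1")
    case True
    have "avg_op m \<beta> w y = 0" using w y(1) by blast
    with True y(2) show ?thesis by (simp add: avg_op_def)
  next
    case False
    define r where "r = \<beta> / (1 - \<beta>)"
    have r: "1 \<le> r" using \<beta> False unfolding r_def by (simp add: field_simps)
    define E where "E = w (butlast y) - w y"
    have w': "\<forall>y\<in>tree_nodes m. avg_op m \<beta> w y = (\<lambda>_. 0) y" using w by simp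
    have "\<beta> < 1" using \<beta> False by simp
    have "S_term m \<beta> (\<lambda>_. 0) y i = 0" for i
      unfolding S_term_def by simp
    then have incr: "succ_avg m i w y - succ_avg m (Suc i) w y = r ^ Suc i * E" for i
      using succ_avg_increment[OF m y(1) w' \<open>\<beta> < 1\<close>, of i] y(2)
      unfolding r_def E_def parent_val_def by simp
    have "\<bar>E\<bar> \<le> e" if e: "e > 0" for e
    proof -
      obtain N where N: "\<And>y j l. y \<in> tree_nodes m \<Longrightarrow> N \<le> length y + j \<Longrightarrow>
          \<bar>succ_avg m (j + l) w y - succ_avg m j w y\<bar> \<le> e"
        using succ_avg_Cauchy_bound[OF m bd e] by blast
      have "\<bar>succ_avg m N w y - succ_avg m (Suc N) w y\<bar> \<le> e"
        using N[OF y(1), of N 1] by (simp only: abs_minus_commute Suc_eq_plus1 order_refl le_add1)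
      then have "r ^ Suc N * \<bar>E\<bar> \<le> e"
        using incr[of N] r by (simp add: abs_mult)
      moreover have "1 * \<bar>E\<bar> \<le> r ^ Suc N * \<bar>E\<bar>"
        using r by (intro mult_right_mono one_le_power) simp_all
      ultimately show ?thesis by linarith
    qed
    then have "\<bar>E\<bar> \<le> 0"
      by (rule field_le_epsilon) simp
    then have "E = 0" by simp
    then show ?thesis unfolding E_def by simp
  qed
  from x show ?thesis
  proof (induction x rule: rev_induct)
    case (snoc a xs)
    then show ?case using parent[OF snoc.prems] by simp
  qed simp
qed

lemma beta_lt_half_if_solvable:
  assumes m: "m \<ge> 2" and \<beta>: "\<beta> \<le> 1"
    and u0: "\<forall>y\<in>tree_nodes m. avg_op m \<beta> u0 y = h y" "boundary_eq m u0 (\<lambda>_. 0)"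
    and u1: "\<forall>y\<in>tree_nodes m. avg_op m \<beta> u1 y = h y" "boundary_eq m u1 (\<lambda>t. t)"
  shows "\<beta> < 1/2"
proof (rule ccontr)
  assume "\<not> \<beta> < 1/2"
  define w where "w x = u1 x - u0 x" for x
  have hom: "\<forall>y\<in>tree_nodes m. avg_op m \<beta> w y = 0"
    using u0(1) u1(1) by (simp add: w_def[abs_def] avg_op_diff)
  have bd: "boundary_eq m w (\<lambda>t. t)"
    using boundary_eq_add[OF u1(2) boundary_eq_minus[OF u0(2)]] by (simp add: w_def[abs_def])
  have const: "w x = w []" if "x \<in> tree_nodes m" for x
    by (rule homogeneous_solution_constant[OF _ _ \<beta> hom bd that]) (use m \<open>\<not> \<beta> < 1/2\<close> in auto)
  obtain K where K: "\<forall>x\<in>tree_nodes m. \<forall>z\<in>branches m. K \<le> length x \<and> passes_through z x \<longrightarrow>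
      \<bar>w x - psi m z\<bar> < 1/2"
    using bd unfolding boundary_eq_def by (meson half_gt_zero zero_less_one)
  have "\<bar>w [] - psi m z\<bar> < 1/2" if z: "z \<in> branches m" for z
    using K map_upt_in_tree_nodes[OF z, of K] passes_through_map_upt[of z K] z const by fastforce
  moreover have "(\<lambda>_. 0) \<in> branches m" and "(\<lambda>_. m - 1) \<in> branches m"
    using m unfolding branches_def by auto
  ultimately have "\<bar>w [] - 0\<bar> < 1/2" and "\<bar>w [] - 1\<bar> < 1/2"
    using psi_zero_branch psi_max_branch[OF m] by metis+
  then show False by linarith
qed

section \<open>Sums and averages along paths\<close>

definition path_sum :: "real \<Rightarrow> (nat list \<Rightarrow> real) \<Rightarrow> nat list \<Rightarrow> real" where
  "path_sum r G x = (\<Sum>j=1..length x. r ^ (length x - j) * G (take j x))"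

lemma path_sum_Nil [simp]: "path_sum r G [] = 0"
  unfolding path_sum_def by simp

lemma path_sum_snoc: "path_sum r G (x @ [a]) = G (x @ [a]) + r * path_sum r G x"
proof -
  have "(\<Sum>j=1..length x. r ^ (Suc (length x) - j) * G (take j (x @ [a]))) =
      r * (\<Sum>j=1..length x. r ^ (length x - j) * G (take j x))"
    unfolding sum_distrib_left
  proof (rule sum.cong)
    fix j assume "j \<in> {1..length x}"
    then have "Suc (length x) - j = Suc (length x - j)" "take j (x @ [a]) = take j x" by auto
    then show "r ^ (Suc (length x) - j) * G (take j (x @ [a])) = r * (r ^ (length x - j) * G (take j x))"
      by simp
  qed simp
  then show ?thesis unfolding path_sum_def by (simp add: add.commute)
qed

lemma path_sum_add: "path_sum r (\<lambda>y. F y + G y) x = path_sum r F x + path_sum r G x"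
  unfolding path_sum_def by (simp add: sum.distrib algebra_simps)

lemma boundary_eq_zero_cmult: "boundary_eq m u (\<lambda>_. 0) \<Longrightarrow> boundary_eq m (\<lambda>x. c * u x) (\<lambda>_. 0)"
proof (cases "c = 0")
  case False
  assume u: "boundary_eq m u (\<lambda>_. 0)"
  show ?thesis
    unfolding boundary_eq_def
  proof (intro allI impI)
    fix e :: real assume "e > 0"
    with False have "e / \<bar>c\<bar> > 0" by simp
    then obtain K where K: "\<forall>x\<in>tree_nodes m. \<forall>z\<in>branches m. K \<le> length x \<and> passes_through z x \<longrightarrow> \<bar>u x - 0\<bar> < e / \<bar>c\<bar>"
      using u unfolding boundary_eq_def by blast
    have "\<bar>c * u x - 0\<bar> < e" if "\<bar>u x - 0\<bar> < e / \<bar>c\<bar>" for x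
      using that False by (simp add: abs_mult pos_less_divide_eq mult.commute)
    with K show "\<exists>K. \<forall>x\<in>tree_nodes m. \<forall>z\<in>branches m. K \<le> length x \<and> passes_through z x \<longrightarrow> \<bar>c * u x - 0\<bar> < e"
      by blast
  qed
qed (simp add: boundary_eq_def)

lemma boundary_eq_geometric:
  assumes "\<bar>r\<bar> < 1"
  shows "boundary_eq m (\<lambda>x. r ^ length x * c) (\<lambda>_. 0)"
  unfolding boundary_eq_def
proof (intro allI impI)
  fix e :: real assume "e > 0"
  have "(\<lambda>k. r ^ k * c) \<longlonglongrightarrow> 0 * c"
    using assms by (intro tendsto_mult_right LIMSEQ_power_zero) simp
  then obtain K where "\<forall>k\<ge>K. \<bar>r ^ k * c\<bar> < e"
    using LIMSEQ_D[OF _ \<open>e > 0\<close>] by fastforce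
  then show "\<exists>K. \<forall>x\<in>tree_nodes m. \<forall>z\<in>branches m. K \<le> length x \<and> passes_through z x \<longrightarrow>
      \<bar>r ^ length x * c - 0\<bar> < e"
    by auto
qed

lemma tendsto_level_SUP_zero_iff:
  assumes m: "m > 0"
  shows "(\<lambda>k. SUP x\<in>{x\<in>tree_nodes m. length x = k}. \<bar>F k x\<bar>) \<longlonglongrightarrow> 0 \<longleftrightarrow>
    boundary_eq m (\<lambda>x. F (length x) x) (\<lambda>_. 0)"
proof -
  let ?A = "\<lambda>k. {x\<in>tree_nodes m. length x = k}"
  have "card (?A k) > 0" for k
    using card_succs[of m k "[]"] m unfolding succs_Nil_eq_level by simp
  then have fin: "finite (?A k)" and ne: "?A k \<noteq> {}" for k
    using card_gt_0_iff by blast+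
  have bdd: "bdd_above ((\<lambda>x. \<bar>F k x\<bar>) ` ?A k)" for k
    using fin by (rule bdd_above_finite[OF finite_imageI])
  have SUP_ge: "\<bar>F k x\<bar> \<le> (SUP x\<in>?A k. \<bar>F k x\<bar>)" if "x \<in> ?A k" for k x
    using that bdd by (rule cSUP_upper)
  have "(\<lambda>k. SUP x\<in>?A k. \<bar>F k x\<bar>) \<longlonglongrightarrow> 0 \<longleftrightarrow>
      (\<forall>e>0. \<exists>K. \<forall>x\<in>tree_nodes m. K \<le> length x \<longrightarrow> \<bar>F (length x) x\<bar> < e)"
  proof
    assume lim: "(\<lambda>k. SUP x\<in>?A k. \<bar>F k x\<bar>) \<longlonglongrightarrow> 0"
    show "\<forall>e>0. \<exists>K. \<forall>x\<in>tree_nodes m. K \<le> length x \<longrightarrow> \<bar>F (length x) x\<bar> < e"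
    proof (intro allI impI)
      fix e :: real assume "e > 0"
      then obtain K where "\<forall>k\<ge>K. \<bar>(SUP x\<in>?A k. \<bar>F k x\<bar>)\<bar> < e"
        using LIMSEQ_D[OF lim] by fastforce
      then show "\<exists>K. \<forall>x\<in>tree_nodes m. K \<le> length x \<longrightarrow> \<bar>F (length x) x\<bar> < e"
        using SUP_ge by (intro exI[of _ K]) (fastforce intro: le_less_trans)
    qed
  next
    assume unif: "\<forall>e>0. \<exists>K. \<forall>x\<in>tree_nodes m. K \<le> length x \<longrightarrow> \<bar>F (length x) x\<bar> < e"
    show "(\<lambda>k. SUP x\<in>?A k. \<bar>F k x\<bar>) \<longlonglongrightarrow> 0"
    proof (rule LIMSEQ_I)
      fix e :: real assume "e > 0"
      then obtain K where K: "\<forall>x\<in>tree_nodes m. K \<le> length x \<longrightarrow> \<bar>F (length x) x\<bar> < e / 2"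
        using unif half_gt_zero by blast
      have "0 \<le> (SUP x\<in>?A k. \<bar>F k x\<bar>) \<and> (SUP x\<in>?A k. \<bar>F k x\<bar>) \<le> e / 2" if "K \<le> k" for k
      proof
        obtain x0 where "x0 \<in> ?A k" using ne by blast
        then show "0 \<le> (SUP x\<in>?A k. \<bar>F k x\<bar>)" by (rule order_trans[OF abs_ge_zero SUP_ge])
        show "(SUP x\<in>?A k. \<bar>F k x\<bar>) \<le> e / 2"
          using K that by (intro cSUP_least[OF ne]) (auto intro: less_imp_le)
      qed
      then show "\<exists>K. \<forall>k\<ge>K. norm ((SUP x\<in>?A k. \<bar>F k x\<bar>) - 0) < e"
        using \<open>e > 0\<close> by (intro exI[of _ K]) force
    qed
  qed
  then show ?thesis
    by (simp add: boundary_eq_zero_iff[OF m])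
qed

lemma boundary_eq_cong:
  "boundary_eq m u f \<Longrightarrow> (\<And>x. x \<in> tree_nodes m \<Longrightarrow> u x = v x) \<Longrightarrow> boundary_eq m v f"
  unfolding boundary_eq_def by simp

lemma S_conditions_if_solution:
  assumes m: "m > 0" and \<beta>: "0 \<le> \<beta>" "\<beta> < 1/2"
    and u: "\<forall>y\<in>tree_nodes m. avg_op m \<beta> u y = h y" and bd: "boundary_eq m u (\<lambda>_. 0)"
  shows "\<forall>x\<in>tree_nodes m. S_conv m \<beta> h x"
    and "boundary_eq m (path_sum (\<beta> / (1 - \<beta>)) (S_beta m \<beta> h)) (\<lambda>_. 0)"
proof -
  define r where "r = \<beta> / (1 - \<beta>)"
  have r: "0 \<le> r" "r < 1" using beta_ratio_bounds[OF \<beta>] unfolding r_def by auto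
  note S = S_beta_of_solution[OF m \<beta> u succ_avg_tendsto_zero[OF m bd], folded r_def]
  show "\<forall>x\<in>tree_nodes m. S_conv m \<beta> h x"
    using S(1) by blast
  have path: "(1 - r) * path_sum r (S_beta m \<beta> h) x = u x - r ^ length x * u []"
    if "x \<in> tree_nodes m" for x
    using that
  proof (induction x rule: rev_induct)
    case (snoc a xs)
    then have IH: "(1 - r) * path_sum r (S_beta m \<beta> h) xs = u xs - r ^ length xs * u []" by simp
    have "(1 - r) * path_sum r (S_beta m \<beta> h) (xs @ [a]) =
        (1 - r) * S_beta m \<beta> h (xs @ [a]) + r * ((1 - r) * path_sum r (S_beta m \<beta> h) xs)"
      unfolding path_sum_snoc by (simp add: algebra_simps)
    also have "\<dots> = (u (xs @ [a]) - r * u xs) + r * (u xs - r ^ length xs * u [])"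
      unfolding IH S(2)[OF snoc.prems snoc.prems] by (simp add: parent_val_def)
    also have "\<dots> = u (xs @ [a]) - r ^ length (xs @ [a]) * u []"
      by (simp add: algebra_simps)
    finally show ?case .
  qed simp
  have "boundary_eq m (\<lambda>x. u x + - (r ^ length x * u [])) (\<lambda>_. 0)"
    using boundary_eq_add[OF bd boundary_eq_minus[OF boundary_eq_geometric[of r m "u []"]]] r by simp
  then have "boundary_eq m (\<lambda>x. 1 / (1 - r) * (u x + - (r ^ length x * u []))) (\<lambda>_. 0)"
    by (rule boundary_eq_zero_cmult)
  then show "boundary_eq m (path_sum r (S_beta m \<beta> h)) (\<lambda>_. 0)"
  proof (rule boundary_eq_cong)
    fix x assume "x \<in> tree_nodes m"
    then show "1 / (1 - r) * (u x + - (r ^ length x * u [])) = path_sum r (S_beta m \<beta> h) x"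
      using path r by (simp add: field_simps)
  qed
qed

lemma sums_beta_geometric:
  fixes \<beta> :: real
  assumes "0 \<le> \<beta>" and "\<beta> < 1/2"
  shows "(\<lambda>n. \<beta> ^ n / (1 - \<beta>) ^ Suc n * c) sums (c / (1 - 2 * \<beta>))"
proof -
  have r: "0 \<le> \<beta> / (1 - \<beta>)" "\<beta> / (1 - \<beta>) < 1"
    using beta_ratio_bounds[OF assms] by auto
  then have "norm (\<beta> / (1 - \<beta>)) < 1"
    by (simp only: real_norm_def abs_of_nonneg[OF r(1)])
  then have "(\<lambda>n. c / (1 - \<beta>) * (\<beta> / (1 - \<beta>)) ^ n) sums (c / (1 - \<beta>) * (1 / (1 - \<beta> / (1 - \<beta>))))"
    by (intro sums_mult geometric_sums)
  also have "(\<lambda>n. c / (1 - \<beta>) * (\<beta> / (1 - \<beta>)) ^ n) = (\<lambda>n. \<beta> ^ n / (1 - \<beta>) ^ Suc n * c)"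
    by (simp add: fun_eq_iff power_divide)
  also have "c / (1 - \<beta>) * (1 / (1 - \<beta> / (1 - \<beta>))) = c / (1 - 2 * \<beta>)"
  proof -
    have "1 - \<beta> / (1 - \<beta>) = (1 - 2 * \<beta>) / (1 - \<beta>)"
      using assms by (simp add: field_simps)
    then show ?thesis using assms by simp
  qed
  finally show ?thesis .
qed

lemma S_beta_mean:
  assumes m: "m > 0" and \<beta>: "0 \<le> \<beta>" "\<beta> < 1/2"
    and conv: "\<forall>y\<in>tree_nodes m. S_conv m \<beta> h y" and x: "x \<in> tree_nodes m"
  shows "(\<Sum>a<m. S_beta m \<beta> h (x @ [a])) / real m = S_beta m \<beta> h x - h x / (1 - 2 * \<beta>)"
proof -
  have "(\<lambda>n. S_term m \<beta> h y (Suc n)) sums S_beta m \<beta> h y" if "y \<in> tree_nodes m" for y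
    using conv that unfolding S_conv_def S_beta_def by (simp add: summable_sums)
  then have "(\<lambda>n. S_term m \<beta> h y n) sums S_beta m \<beta> h y" if "y \<in> tree_nodes m" for y
    using that unfolding sums_Suc_iff by simp
  then have "(\<lambda>n. \<beta> ^ n / (1 - \<beta>) ^ Suc n * h x + (\<Sum>a<m. S_term m \<beta> h (x @ [a]) n) / real m)
      sums (h x / (1 - 2 * \<beta>) + (\<Sum>a<m. S_beta m \<beta> h (x @ [a])) / real m)"
    using x by (intro sums_add sums_beta_geometric[OF \<beta>] sums_divide sums_sum) auto
  then have "(\<lambda>n. S_term m \<beta> h x (Suc n)) sums (h x / (1 - 2 * \<beta>) + (\<Sum>a<m. S_beta m \<beta> h (x @ [a])) / real m)"
    unfolding S_term_Suc_split[OF m] .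
  then have "S_beta m \<beta> h x = h x / (1 - 2 * \<beta>) + (\<Sum>a<m. S_beta m \<beta> h (x @ [a])) / real m"
    unfolding S_beta_def by (rule sums_unique[symmetric])
  then show ?thesis by simp
qed

definition path_avg :: "real \<Rightarrow> (nat list \<Rightarrow> real) \<Rightarrow> real \<Rightarrow> nat list \<Rightarrow> real" where
  "path_avg r G c x = (1 - r) * path_sum r G x + r ^ length x * c"

lemma path_avg_Nil [simp]: "path_avg r G c [] = c"
  unfolding path_avg_def by simp

lemma path_avg_snoc: "path_avg r G c (x @ [a]) = (1 - r) * G (x @ [a]) + r * path_avg r G c x"
  unfolding path_avg_def path_sum_snoc by (simp add: algebra_simps)

lemma path_avg_add: "path_avg r (\<lambda>y. F y + G y) c x = path_avg r F c x + (1 - r) * path_sum r G x"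
  unfolding path_avg_def path_sum_add by (simp add: algebra_simps)

lemma avg_op_path_avg:
  assumes m: "m > 0" and \<beta>: "\<beta> < 1/2"
    and G: "\<And>y. y \<in> tree_nodes m \<Longrightarrow> (\<Sum>a<m. G (y @ [a])) / real m = G y - h y / (1 - 2 * \<beta>)"
    and x: "x \<in> tree_nodes m"
  shows "avg_op m \<beta> (path_avg (\<beta> / (1 - \<beta>)) G (G [] - \<beta> * h [] / (1 - 2 * \<beta>))) x = h x"
proof -
  define r where "r = \<beta> / (1 - \<beta>)"
  define k where "k = 1 / (1 - 2 * \<beta>)"
  define u where "u = path_avg r G (G [] - \<beta> * h [] * k)"
  have qr: "(1 - \<beta>) * r = \<beta>" and kk: "(1 - 2 * \<beta>) * k = 1"
    using \<beta> unfolding r_def k_def by auto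
  have qs: "(1 - \<beta>) * (1 - r) = 1 - 2 * \<beta>"
    using qr by (simp add: algebra_simps)
  have "(\<Sum>a<m. u (x @ [a])) = (1 - r) * (\<Sum>a<m. G (x @ [a])) + real m * (r * u x)"
    unfolding u_def path_avg_snoc by (simp add: sum.distrib sum_distrib_left)
  then have "(\<Sum>a<m. u (x @ [a])) / real m = (1 - r) * ((\<Sum>a<m. G (x @ [a])) / real m) + r * u x"
    using m by (simp add: add_divide_distrib)
  then have mean: "(\<Sum>a<m. u (x @ [a])) / real m = (1 - r) * (G x - h x * k) + r * u x"
    unfolding G[OF x] by (simp add: k_def)
  have "avg_op m \<beta> u x = h x"
  proof (cases "x = []")
    case True
    have "avg_op m \<beta> u x = (G [] - \<beta> * h [] * k) - ((1 - r) * (G [] - h [] * k) + r * (G [] - \<beta> * h [] * k))"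
      using mean True unfolding avg_op_def by (simp add: u_def)
    also have "\<dots> = ((1 - \<beta>) * (1 - r)) * k * h []"
      by (simp add: algebra_simps)
    finally show ?thesis
      using True qs kk by simp
  next
    case False
    then have ux: "u x = (1 - r) * G x + r * u (butlast x)"
      unfolding u_def by (metis append_butlast_last_id path_avg_snoc)
    have "avg_op m \<beta> u x = u x - \<beta> * u (butlast x) - (1 - \<beta>) * ((\<Sum>a<m. u (x @ [a])) / real m)"
      using False unfolding avg_op_def by simp
    also have "\<dots> = ((1 - \<beta>) * (1 - r)) * G x + ((1 - \<beta>) * r) * u (butlast x) - \<beta> * u (butlast x)
        - ((1 - \<beta>) * (1 - r)) * (G x - h x * k) - ((1 - \<beta>) * r - \<beta>) * u x"
      unfolding mean ux by (simp add: algebra_simps)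
    also have "\<dots> = ((1 - 2 * \<beta>) * k) * h x"
      unfolding qr qs by (simp add: algebra_simps)
    finally show ?thesis
      using kk by simp
  qed
  then show ?thesis
    unfolding u_def r_def k_def by simp
qed

lemma abs_convex_comb_sub_le:
  fixes r a b t :: real
  assumes "0 \<le> r" and "r \<le> 1"
  shows "\<bar>(1 - r) * a + r * b - t\<bar> \<le> (1 - r) * \<bar>a - t\<bar> + r * \<bar>b - t\<bar>"
proof -
  have "\<bar>(1 - r) * a + r * b - t\<bar> = \<bar>(1 - r) * (a - t) + r * (b - t)\<bar>"
    by (simp add: algebra_simps)
  also have "\<dots> \<le> \<bar>(1 - r) * (a - t)\<bar> + \<bar>r * (b - t)\<bar>"
    by (rule abs_triangle_ineq)
  finally show ?thesis
    using assms by (simp add: abs_mult)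
qed

lemma abs_path_avg_le:
  assumes r: "0 \<le> r" "r \<le> 1" and G: "\<forall>y\<in>tree_nodes m. \<bar>G y\<bar> \<le> B"
    and x: "x \<in> tree_nodes m"
  shows "\<bar>path_avg r G c x\<bar> \<le> max B \<bar>c\<bar>"
  using x
proof (induction x rule: rev_induct)
  case (snoc a xs)
  have "\<bar>G (xs @ [a])\<bar> \<le> B" using G snoc.prems by blast
  then have "\<bar>G (xs @ [a])\<bar> \<le> max B \<bar>c\<bar>" by simp
  moreover have "\<bar>path_avg r G c xs\<bar> \<le> max B \<bar>c\<bar>" using snoc by simp
  ultimately have "(1 - r) * \<bar>G (xs @ [a]) - 0\<bar> + r * \<bar>path_avg r G c xs - 0\<bar> \<le> (1 - r) * max B \<bar>c\<bar> + r * max B \<bar>c\<bar>"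
    using r by (intro add_mono mult_left_mono) auto
  then show ?case
    using abs_convex_comb_sub_le[OF r, of "G (xs @ [a])" "path_avg r G c xs" 0]
    by (simp add: path_avg_snoc algebra_simps)
qed simp

lemma path_avg_dist_le:
  assumes r: "0 \<le> r" "r \<le> 1" and e: "0 \<le> e" and J: "J \<le> length x"
    and close: "\<And>i. J < i \<Longrightarrow> i \<le> length x \<Longrightarrow> \<bar>G (take i x) - t\<bar> \<le> e"
  shows "\<bar>path_avg r G c x - t\<bar> \<le> e + r ^ (length x - J) * \<bar>path_avg r G c (take J x) - t\<bar>"
  using J close
proof (induction x rule: rev_induct)
  case (snoc a xs)
  show ?case
  proof (cases "J = length (xs @ [a])")
    case True
    then show ?thesis using e by simp
  next
    case False
    then have J: "J \<le> length xs" using snoc.prems(1) by simp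
    have "\<bar>G (take i xs) - t\<bar> \<le> e" if "J < i" "i \<le> length xs" for i
      using snoc.prems(2)[of i] that by simp
    then have IH: "\<bar>path_avg r G c xs - t\<bar> \<le> e + r ^ (length xs - J) * \<bar>path_avg r G c (take J xs) - t\<bar>"
      by (rule snoc.IH[OF J])
    have new: "\<bar>G (xs @ [a]) - t\<bar> \<le> e"
      using snoc.prems(2)[of "length (xs @ [a])"] J by simp
    have "\<bar>path_avg r G c (xs @ [a]) - t\<bar> \<le> (1 - r) * \<bar>G (xs @ [a]) - t\<bar> + r * \<bar>path_avg r G c xs - t\<bar>"
      unfolding path_avg_snoc by (rule abs_convex_comb_sub_le[OF r])
    also have "\<dots> \<le> (1 - r) * e + r * (e + r ^ (length xs - J) * \<bar>path_avg r G c (take J xs) - t\<bar>)"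
      using r new IH by (intro add_mono mult_left_mono) auto
    also have "\<dots> = e + r ^ (length (xs @ [a]) - J) * \<bar>path_avg r G c (take J (xs @ [a])) - t\<bar>"
      using J by (simp add: Suc_diff_le algebra_simps)
    finally show ?thesis .
  qed
qed (simp add: e)

lemma boundary_eq_path_avg:
  assumes r: "0 \<le> r" "r < 1" and G: "boundary_eq m G f" and B: "\<forall>y\<in>tree_nodes m. \<bar>G y\<bar> \<le> B"
  shows "boundary_eq m (path_avg r G c) f"
  unfolding boundary_eq_def
proof (intro allI impI)
  fix \<epsilon> :: real assume "\<epsilon> > 0"
  define e where "e = \<epsilon> / 2"
  have e: "e > 0" using \<open>\<epsilon> > 0\<close> by (simp add: e_def)
  obtain J where J: "\<forall>x\<in>tree_nodes m. \<forall>z\<in>branches m. J \<le> length x \<and> passes_through z x \<longrightarrow>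
      \<bar>G x - f (psi m z)\<bar> < e"
    using G e unfolding boundary_eq_def by blast
  define D where "D = max B \<bar>c\<bar> + B + e"
  have "(\<lambda>n. r ^ n * D) \<longlonglongrightarrow> 0 * D"
    using r by (intro tendsto_mult_right LIMSEQ_power_zero) simp
  then obtain N where N: "\<forall>n\<ge>N. \<bar>r ^ n * D\<bar> < e"
    using LIMSEQ_D[OF _ e] by fastforce
  show "\<exists>K. \<forall>x\<in>tree_nodes m. \<forall>z\<in>branches m. K \<le> length x \<and> passes_through z x \<longrightarrow>
      \<bar>path_avg r G c x - f (psi m z)\<bar> < \<epsilon>"
  proof (intro exI[of _ "J + N"] ballI impI)
    fix x z assume x: "x \<in> tree_nodes m" and z: "z \<in> branches m"
      and deep: "J + N \<le> length x \<and> passes_through z x"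
    define t where "t = f (psi m z)"
    have G_close: "\<bar>G (take i x) - t\<bar> < e" if "J \<le> i" "i \<le> length x" for i
      using J take_in_tree_nodes[OF x, of i] z passes_through_take[of z x i] deep that
      unfolding t_def by simp
    have "\<bar>path_avg r G c x - t\<bar> \<le> e + r ^ (length x - J) * \<bar>path_avg r G c (take J x) - t\<bar>"
      using r e deep G_close by (intro path_avg_dist_le) (auto intro: less_imp_le)
    moreover have "\<bar>path_avg r G c (take J x) - t\<bar> \<le> D"
    proof -
      have "\<bar>path_avg r G c (take J x)\<bar> \<le> max B \<bar>c\<bar>"
        using r B take_in_tree_nodes[OF x] by (intro abs_path_avg_le) auto
      moreover have "\<bar>G (take J x)\<bar> \<le> B"
        using B take_in_tree_nodes[OF x] by blast
      moreover have "\<bar>G (take J x) - t\<bar> < e"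
        using G_close[of J] deep by simp
      ultimately show ?thesis unfolding D_def by linarith
    qed
    then have "r ^ (length x - J) * \<bar>path_avg r G c (take J x) - t\<bar> \<le> r ^ (length x - J) * D"
      using r by (intro mult_left_mono) auto
    moreover have "r ^ (length x - J) * D < e"
    proof -
      have "N \<le> length x - J" using deep by linarith
      with N have "\<bar>r ^ (length x - J) * D\<bar> < e" by blast
      then show ?thesis by linarith
    qed
    ultimately show "\<bar>path_avg r G c x - f (psi m z)\<bar> < \<epsilon>"
      unfolding t_def e_def by linarith
  qed
qed

section \<open>The Dirichlet problem\<close>

definition dirichlet_solution ::
    "nat \<Rightarrow> real \<Rightarrow> (nat list \<Rightarrow> real) \<Rightarrow> (real \<Rightarrow> real) \<Rightarrow> (nat list \<Rightarrow> real) \<Rightarrow> bool" where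
  "dirichlet_solution m \<beta> h f u \<longleftrightarrow> (\<exists>C. \<forall>x\<in>tree_nodes m. \<bar>u x\<bar> \<le> C)
     \<and> (\<forall>x\<in>tree_nodes m. avg_op m \<beta> u x = h x) \<and> boundary_eq m u f"

lemma necessary_conditions:
  assumes m: "m \<ge> 2" and \<beta>: "0 \<le> \<beta>" "\<beta> \<le> 1"
    and solvable: "\<forall>f. continuous_on {0..1} f \<longrightarrow> (\<exists>u. dirichlet_solution m \<beta> h f u)"
  shows "\<beta> < 1/2 \<and> (\<forall>x\<in>tree_nodes m. S_conv m \<beta> h x)
    \<and> (\<lambda>k. SUP x\<in>{x\<in>tree_nodes m. length x = k}.
         \<bar>\<Sum>j=1..k. (\<beta> / (1 - \<beta>)) ^ (k - j) * S_beta m \<beta> h (take j x)\<bar>) \<longlonglongrightarrow> 0"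
proof -
  have m0: "m > 0" using m by simp
  obtain u0 where u0: "dirichlet_solution m \<beta> h (\<lambda>_. 0) u0"
    using solvable continuous_on_const by blast
  obtain u1 where u1: "dirichlet_solution m \<beta> h (\<lambda>t. t) u1"
    using solvable continuous_on_id by blast
  have half: "\<beta> < 1/2"
    using beta_lt_half_if_solvable[OF m \<beta>(2)] u0 u1 unfolding dirichlet_solution_def by blast
  have S: "\<forall>x\<in>tree_nodes m. S_conv m \<beta> h x"
    "boundary_eq m (path_sum (\<beta> / (1 - \<beta>)) (S_beta m \<beta> h)) (\<lambda>_. 0)"
    using S_conditions_if_solution[OF m0 \<beta>(1) half] u0 unfolding dirichlet_solution_def by blast+
  then show ?thesis
    using half unfolding tendsto_level_SUP_zero_iff[OF m0] path_sum_def[abs_def] by simp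
qed

lemma dirichlet_solution_unique:
  assumes m: "m > 0" and \<beta>: "0 \<le> \<beta>" "\<beta> < 1/2"
    and u: "dirichlet_solution m \<beta> h f u" and v: "dirichlet_solution m \<beta> h f v"
    and x: "x \<in> tree_nodes m"
  shows "v x = u x"
proof -
  have "\<forall>y\<in>tree_nodes m. avg_op m \<beta> (\<lambda>y. v y - u y) y = 0"
    using u v unfolding dirichlet_solution_def by (simp add: avg_op_diff)
  moreover have "boundary_eq m (\<lambda>y. v y - u y) (\<lambda>_. 0)"
    using boundary_eq_add[OF _ boundary_eq_minus, of m v f u f] u v
    unfolding dirichlet_solution_def by simp
  ultimately show ?thesis
    using homogeneous_solution_eq_zero[OF m \<beta>] x by fastforce
qed

lemma dirichlet_solution_exists:
  assumes m: "m \<ge> 2" and \<beta>: "0 \<le> \<beta>" "\<beta> < 1/2"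
    and conv: "\<forall>x\<in>tree_nodes m. S_conv m \<beta> h x"
    and lim: "(\<lambda>k. SUP x\<in>{x\<in>tree_nodes m. length x = k}.
         \<bar>\<Sum>j=1..k. (\<beta> / (1 - \<beta>)) ^ (k - j) * S_beta m \<beta> h (take j x)\<bar>) \<longlonglongrightarrow> 0"
    and f: "continuous_on {0..1} f"
  shows "\<exists>u. dirichlet_solution m \<beta> h f u"
proof -
  have m0: "m > 0" using m by simp
  define r where "r = \<beta> / (1 - \<beta>)"
  have r: "0 \<le> r" "r < 1" using beta_ratio_bounds[OF \<beta>] unfolding r_def by auto
  define F where "F = harmonic_ext m (\<lambda>x. f (psi m (pad_branch x)))"
  define S where "S = S_beta m \<beta> h"
  define c where "c = F [] + S [] - \<beta> * h [] / (1 - 2 * \<beta>)"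
  define u where "u = path_avg r (\<lambda>y. F y + S y) c"
  obtain M where M: "\<forall>t\<in>{0..1}. \<bar>f t\<bar> \<le> M"
    using compact_imp_bounded[OF compact_continuous_image[OF f compact_Icc]] unfolding bounded_real by auto
  have F: "boundary_eq m F f"
    unfolding F_def by (rule boundary_eq_harmonic_ext[OF m0 boundary_eq_comp_psi_pad[OF m f]])
  have "(\<Sum>a<m. F (y @ [a]) + S (y @ [a])) / real m = F y + S y - h y / (1 - 2 * \<beta>)"
    if "y \<in> tree_nodes m" for y
    using harmonic_ext_mean[OF m0 boundary_eq_comp_psi_pad[OF m f] that] S_beta_mean[OF m0 \<beta> conv that]
    unfolding F_def S_def by (simp add: sum.distrib add_divide_distrib)
  then have solves: "\<forall>x\<in>tree_nodes m. avg_op m \<beta> u x = h x"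
    unfolding u_def c_def r_def by (auto intro: avg_op_path_avg[OF m0 \<beta>(2)])
  obtain B where "\<forall>x\<in>tree_nodes m. \<bar>F x\<bar> \<le> B"
    using boundary_eq_bounded[OF m F M] by blast
  then have "boundary_eq m (path_avg r F c) f"
    by (rule boundary_eq_path_avg[OF r F])
  moreover have "boundary_eq m (path_sum r S) (\<lambda>_. 0)"
    using lim unfolding tendsto_level_SUP_zero_iff[OF m0] path_sum_def[abs_def] r_def S_def .
  then have "boundary_eq m (\<lambda>x. (1 - r) * path_sum r S x) (\<lambda>_. 0)"
    by (rule boundary_eq_zero_cmult)
  ultimately have bd: "boundary_eq m u f"
    using boundary_eq_add unfolding u_def path_avg_add by fastforce
  obtain C where "\<forall>x\<in>tree_nodes m. \<bar>u x\<bar> \<le> C"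
    using boundary_eq_bounded[OF m bd M] by blast
  then show ?thesis
    using solves bd unfolding dirichlet_solution_def by blast
qed

lemma dirichlet_solution_exists_unique:
  assumes m: "m \<ge> 2" and \<beta>: "0 \<le> \<beta>" "\<beta> < 1/2"
    and conv: "\<forall>x\<in>tree_nodes m. S_conv m \<beta> h x"
    and lim: "(\<lambda>k. SUP x\<in>{x\<in>tree_nodes m. length x = k}.
         \<bar>\<Sum>j=1..k. (\<beta> / (1 - \<beta>)) ^ (k - j) * S_beta m \<beta> h (take j x)\<bar>) \<longlonglongrightarrow> 0"
    and f: "continuous_on {0..1} f"
  shows "\<exists>u. dirichlet_solution m \<beta> h f u
    \<and> (\<forall>v. dirichlet_solution m \<beta> h f v \<longrightarrow> (\<forall>x\<in>tree_nodes m. v x = u x))"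
proof -
  obtain u where u: "dirichlet_solution m \<beta> h f u"
    using dirichlet_solution_exists[OF assms] by blast
  have "m > 0" using m by simp
  with u show ?thesis
    using dirichlet_solution_unique[OF _ \<beta> u] by blast
qed

theorem theorem1p2:
  fixes m :: nat and \<beta> :: real and h :: "nat list \<Rightarrow> real"
  assumes "m \<ge> 2" and "0 \<le> \<beta>" and "\<beta> \<le> 1"
  shows "(\<forall>f :: real \<Rightarrow> real. continuous_on {0..1} f \<longrightarrow>
            (\<exists>u. (\<exists>C. \<forall>x\<in>tree_nodes m. \<bar>u x\<bar> \<le> C)
                 \<and> (\<forall>x\<in>tree_nodes m. avg_op m \<beta> u x = h x)
                 \<and> boundary_eq m u f
                 \<and> (\<forall>v. (\<exists>C. \<forall>x\<in>tree_nodes m. \<bar>v x\<bar> \<le> C)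
                        \<and> (\<forall>x\<in>tree_nodes m. avg_op m \<beta> v x = h x)
                        \<and> boundary_eq m v f
                        \<longrightarrow> (\<forall>x\<in>tree_nodes m. v x = u x))))
         \<longleftrightarrow>
         (0 \<le> \<beta> \<and> \<beta> < 1/2
          \<and> (\<forall>x\<in>tree_nodes m. S_conv m \<beta> h x)
          \<and> ((\<lambda>k. SUP x\<in>{x\<in>tree_nodes m. length x = k}.
                 \<bar>\<Sum>j=1..k. (\<beta> / (1 - \<beta>)) ^ (k - j) * S_beta m \<beta> h (take j x)\<bar>)
               \<longlonglongrightarrow> 0))"
  using necessary_conditions[OF assms, of h] dirichlet_solution_exists_unique[OF assms(1,2), of h] assms(2)
  unfolding dirichlet_solution_def by (intro iffI) blast+

end
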